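(* For $n\le 7$, the independent locus $U_n$ equals all of $\mathcal{M}_{5,n}\setminus\mathcal{M}_{5,n}^3$.
   Context: Work over an algebraically closed field of characteristic not $2,3,5$. $\mathcal{M}_{5,n}$ is the moduli stack of smooth genus $5$ curves with $n$ distinct ordered marked points, and $\mathcal{M}_{5,n}^k$ is the closed locus of curves of gonality $\le k$. Points of $\mathcal{M}_{5,n}\setminus\mathcal{M}_{5,n}^3$ are curves whose canonical embedding in $\mathbb{P}^4$ is a complete intersection of three quadrics. $U_n$ is the open substack of $\mathcal{M}_{5,n}\setminus\mathcal{M}_{5,n}^3$ where the $n$ marked points, in the canonical embedding $C\subset\mathbb{P}^4$, impose independent conditions on quadrics, i.e. $H^0(\mathbb{P}^4,\mathcal{O}(2))\to\bigoplus_{i=1}^n\mathcal{O}(2)|_{p_i}$ is surjective. *)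

theory Defs
  imports "HOL-Computational_Algebra.Polynomial"
begin

text \<open>Concrete model of the canonical embedding in P^4: vectors of k^5 are
functions nat => k of which only coordinates 0..4 matter.\<close>

definition alg_closed_field :: "'a::field itself \<Rightarrow> bool" where
  "alg_closed_field _ \<longleftrightarrow> (\<forall>p::'a poly. degree p \<ge> 1 \<longrightarrow> (\<exists>x. poly p x = 0))"

definition char_not_2_3_5 :: "'a::field itself \<Rightarrow> bool" where
  "char_not_2_3_5 _ \<longleftrightarrow> (of_nat 2 :: 'a) \<noteq> 0 \<and> (of_nat 3 :: 'a) \<noteq> 0 \<and> (of_nat 5 :: 'a) \<noteq> 0"

definition quad :: "(nat \<Rightarrow> nat \<Rightarrow> 'a::field) \<Rightarrow> (nat \<Rightarrow> 'a) \<Rightarrow> 'a" where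
  "quad A x = (\<Sum>i<5. \<Sum>j<5. A i j * x i * x j)"

definition quad_grad :: "(nat \<Rightarrow> nat \<Rightarrow> 'a::field) \<Rightarrow> (nat \<Rightarrow> 'a) \<Rightarrow> nat \<Rightarrow> 'a" where
  "quad_grad A x k = (\<Sum>j<5. (A k j + A j k) * x j)"

definition nonzero5 :: "(nat \<Rightarrow> 'a::field) \<Rightarrow> bool" where
  "nonzero5 x \<longleftrightarrow> (\<exists>k<5. x k \<noteq> 0)"

definition proj_eq :: "(nat \<Rightarrow> 'a::field) \<Rightarrow> (nat \<Rightarrow> 'a) \<Rightarrow> bool" where
  "proj_eq x y \<longleftrightarrow> (\<exists>c. \<forall>k<5. x k = c * y k)"

definition cone3 :: "(nat \<Rightarrow> nat \<Rightarrow> 'a::field) \<Rightarrow> (nat \<Rightarrow> nat \<Rightarrow> 'a) \<Rightarrow> (nat \<Rightarrow> nat \<Rightarrow> 'a)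
    \<Rightarrow> (nat \<Rightarrow> 'a) set" where
  "cone3 Q1 Q2 Q3 = {x. nonzero5 x \<and> quad Q1 x = 0 \<and> quad Q2 x = 0 \<and> quad Q3 x = 0}"

text \<open>Such a
curve is exactly a canonically embedded non-trigonal smooth genus 5 curve.\<close>
definition smooth_ci_curve :: "(nat \<Rightarrow> nat \<Rightarrow> 'a::field) \<Rightarrow> (nat \<Rightarrow> nat \<Rightarrow> 'a) \<Rightarrow> (nat \<Rightarrow> nat \<Rightarrow> 'a) \<Rightarrow> bool" where
  "smooth_ci_curve Q1 Q2 Q3 \<longleftrightarrow>
     (\<forall>x\<in>cone3 Q1 Q2 Q3. \<forall>c1 c2 c3.
        (\<forall>k<5. c1 * quad_grad Q1 x k + c2 * quad_grad Q2 x k + c3 * quad_grad Q3 x k = 0)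
        \<longrightarrow> c1 = 0 \<and> c2 = 0 \<and> c3 = 0)"

text \<open>Points p 0, ..., p (n-1) impose independent conditions on quadrics:
evaluation H^0(O(2)) -> k^n is surjective.\<close>
definition indep_on_quadrics :: "nat \<Rightarrow> (nat \<Rightarrow> nat \<Rightarrow> 'a::field) \<Rightarrow> bool" where
  "indep_on_quadrics n p \<longleftrightarrow> (\<forall>c::nat \<Rightarrow> 'a. \<exists>A. \<forall>i<n. quad A (p i) = c i)"

end

theory Submission
  imports Defs
begin

text \<open>For each marked point p j we build a quadric vanishing at the other marked points but not at
  p j; Lagrange interpolation then gives surjectivity.  The quadric is a product of two hyperplanes,
  each through some of the at most six other points but not through p j.

  Such hyperplanes exist because X, the intersection of three quadrics with independent gradients,
  has no three collinear points and no five coplanar points.  Three points on a line force the line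
  into every quadric of the net, five points on a plane force a pencil of the net to contain the
  plane and the whole net to contain a conic; in either case a determinant of gradient components,
  a binary form of degree 3 resp. 4 in the parameter of the line resp. conic, has a zero, where the
  gradients become dependent, contradicting smoothness.  Consequently p j lies in the span of at
  most one of two triples sharing two points, and a short case analysis splits the other six points
  into two triples whose spans both miss p j.\<close>

section \<open>Binary forms\<close>

definition binary_form :: "nat \<Rightarrow> ('a::field \<Rightarrow> 'a \<Rightarrow> 'a) \<Rightarrow> bool" where
  "binary_form d F \<longleftrightarrow> (\<exists>P. degree P \<le> d \<and> (\<forall>s t. t \<noteq> 0 \<longrightarrow> F s t = t^d * poly P (s/t))
       \<and> (\<forall>s. F s 0 = coeff P d * s^d))"

lemma coeff_mult_at_degree_bounds:
  fixes P Q :: "'a::field poly"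
  assumes "degree P \<le> m" "degree Q \<le> k"
  shows "coeff (P * Q) (m + k) = coeff P m * coeff Q k"
proof (cases "degree P = m \<and> degree Q = k")
  case True
  then show ?thesis using coeff_mult_degree_sum[of P Q] by simp
next
  case False
  then have "degree (P * Q) < m + k"
    using assms degree_mult_le[of P Q] by linarith
  moreover have "coeff P m = 0 \<or> coeff Q k = 0"
    using False assms by (auto simp: coeff_eq_0)
  ultimately show ?thesis by (auto simp: coeff_eq_0)
qed

lemma binary_form_add:
  assumes "binary_form d F" "binary_form d G"
  shows "binary_form d (\<lambda>s t. F s t + G s t)"
proof -
  obtain P Q where "degree P \<le> d" "\<forall>s t. t \<noteq> 0 \<longrightarrow> F s t = t^d * poly P (s/t)" "\<forall>s. F s 0 = coeff P d * s^d"
    "degree Q \<le> d" "\<forall>s t. t \<noteq> 0 \<longrightarrow> G s t = t^d * poly Q (s/t)" "\<forall>s. G s 0 = coeff Q d * s^d"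
    using assms unfolding binary_form_def by blast
  then show ?thesis unfolding binary_form_def
    by (intro exI[of _ "P + Q"]) (auto simp: degree_add_le algebra_simps)
qed

lemma binary_form_diff:
  assumes "binary_form d F" "binary_form d G"
  shows "binary_form d (\<lambda>s t. F s t - G s t)"
proof -
  obtain P Q where "degree P \<le> d" "\<forall>s t. t \<noteq> 0 \<longrightarrow> F s t = t^d * poly P (s/t)" "\<forall>s. F s 0 = coeff P d * s^d"
    "degree Q \<le> d" "\<forall>s t. t \<noteq> 0 \<longrightarrow> G s t = t^d * poly Q (s/t)" "\<forall>s. G s 0 = coeff Q d * s^d"
    using assms unfolding binary_form_def by blast
  then show ?thesis unfolding binary_form_def
    by (intro exI[of _ "P - Q"]) (auto simp: degree_diff_le algebra_simps)
qed

lemma binary_form_mult: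
  assumes "binary_form d F" "binary_form e G"
  shows "binary_form (d + e) (\<lambda>s t. F s t * G s t)"
proof -
  obtain P Q where P: "degree P \<le> d" "\<forall>s t. t \<noteq> 0 \<longrightarrow> F s t = t^d * poly P (s/t)"
      "\<forall>s. F s 0 = coeff P d * s^d"
    and Q: "degree Q \<le> e" "\<forall>s t. t \<noteq> 0 \<longrightarrow> G s t = t^e * poly Q (s/t)"
      "\<forall>s. G s 0 = coeff Q e * s^e"
    using assms unfolding binary_form_def by blast
  have "degree (P * Q) \<le> d + e"
    using P(1) Q(1) degree_mult_le[of P Q] by linarith
  then show ?thesis unfolding binary_form_def using P Q
    by (intro exI[of _ "P * Q"]) (auto simp: coeff_mult_at_degree_bounds power_add)
qed

lemma binary_form_const: "binary_form 0 (\<lambda>s t. c)"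
  unfolding binary_form_def by (rule exI[of _ "[:c:]"]) auto

lemma binary_form_fst: "binary_form 1 (\<lambda>s t. s)"
  unfolding binary_form_def by (rule exI[of _ "[:0, 1:]"]) auto

lemma binary_form_snd: "binary_form 1 (\<lambda>s t. t)"
  unfolding binary_form_def by (rule exI[of _ "[:1:]"]) auto

lemma binary_form_scale:
  assumes "binary_form d F" shows "binary_form d (\<lambda>s t. F s t * c)"
  using binary_form_mult[OF assms binary_form_const, of c] by simp

lemma binary_form_linear: "binary_form 1 (\<lambda>s t. s * u + t * v)"
  by (intro binary_form_add binary_form_scale binary_form_fst binary_form_snd)

lemma binary_form_quadratic_monomials:
  "binary_form 2 (\<lambda>s t. s * s)" "binary_form 2 (\<lambda>s t. s * t)" "binary_form 2 (\<lambda>s t. t * t)"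
  using binary_form_mult[OF binary_form_fst binary_form_fst] binary_form_mult[OF binary_form_fst binary_form_snd]
    binary_form_mult[OF binary_form_snd binary_form_snd]
  by (simp_all add: numeral_2_eq_2)

lemma binary_form_has_zero:
  assumes "alg_closed_field TYPE('a::field)" "binary_form d (F :: 'a \<Rightarrow> 'a \<Rightarrow> 'a)" "d \<ge> 1"
  obtains s t where "s \<noteq> 0 \<or> t \<noteq> 0" "F s t = 0"
proof -
  obtain P where P: "degree P \<le> d" "\<forall>s t. t \<noteq> 0 \<longrightarrow> F s t = t^d * poly P (s/t)"
    "\<forall>s. F s 0 = coeff P d * s^d" using assms(2) unfolding binary_form_def by blast
  show ?thesis
  proof (cases "coeff P d = 0")
    case True
    then show ?thesis using P(3) that[of 1 0] by simp
  next
    case False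
    then have "degree P \<ge> 1" using assms(3) le_degree by fastforce
    then obtain x where "poly P x = 0" using assms(1) unfolding alg_closed_field_def by blast
    then show ?thesis using P(2) that[of x 1] by simp
  qed
qed

lemma det2_zero_left_kernel:
  fixes m11 m12 m21 m22 :: "'a::field"
  assumes "m11 * m22 - m12 * m21 = 0"
  obtains e1 e2 where "e1 \<noteq> 0 \<or> e2 \<noteq> 0" "e1 * m11 + e2 * m21 = 0" "e1 * m12 + e2 * m22 = 0"
proof (cases "m11 = 0 \<and> m21 = 0")
  case True
  show ?thesis
  proof (cases "m12 = 0 \<and> m22 = 0")
    case False
    then show ?thesis using True that[of m22 "- m12"] by (auto simp: algebra_simps)
  qed (use True that[of 1 0] in auto)
next
  case False
  then show ?thesis using assms that[of m21 "- m11"] by (auto simp: algebra_simps)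
qed

definition det3 :: "'a::field \<Rightarrow> 'a \<Rightarrow> 'a \<Rightarrow> 'a \<Rightarrow> 'a \<Rightarrow> 'a \<Rightarrow> 'a \<Rightarrow> 'a \<Rightarrow> 'a \<Rightarrow> 'a" where
  "det3 m11 m12 m13 m21 m22 m23 m31 m32 m33 =
     m11 * (m22 * m33 - m23 * m32) - m12 * (m21 * m33 - m23 * m31) + m13 * (m21 * m32 - m22 * m31)"

lemma det3_transpose:
  "det3 m11 m12 m13 m21 m22 m23 m31 m32 m33 = det3 m11 m21 m31 m12 m22 m32 m13 m23 m33"
  unfolding det3_def by algebra

lemma det3_nonzero_kernel:
  fixes m11 m12 m13 m21 m22 m23 m31 m32 m33 x1 x2 x3 :: "'a::field"
  assumes "det3 m11 m12 m13 m21 m22 m23 m31 m32 m33 \<noteq> 0"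
    and "x1 * m11 + x2 * m12 + x3 * m13 = 0"
    and "x1 * m21 + x2 * m22 + x3 * m23 = 0"
    and "x1 * m31 + x2 * m32 + x3 * m33 = 0"
  shows "x1 = 0 \<and> x2 = 0 \<and> x3 = 0"
proof -
  let ?d = "det3 m11 m12 m13 m21 m22 m23 m31 m32 m33"
  let ?e1 = "x1 * m11 + x2 * m12 + x3 * m13"
  let ?e2 = "x1 * m21 + x2 * m22 + x3 * m23"
  let ?e3 = "x1 * m31 + x2 * m32 + x3 * m33"
  \<comment> \<open>Cramer's rule, multiplied out\<close>
  have "x1 * ?d = ?e1 * (m22*m33 - m23*m32) - ?e2 * (m12*m33 - m13*m32) + ?e3 * (m12*m23 - m13*m22)"
    "x2 * ?d = - ?e1 * (m21*m33 - m23*m31) + ?e2 * (m11*m33 - m13*m31) - ?e3 * (m11*m23 - m13*m21)"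
    "x3 * ?d = ?e1 * (m21*m32 - m22*m31) - ?e2 * (m11*m32 - m12*m31) + ?e3 * (m11*m22 - m12*m21)"
    unfolding det3_def by algebra+
  then have "x1 * ?d = 0" "x2 * ?d = 0" "x3 * ?d = 0"
    using assms(2-4) by (simp_all only: mult_zero_left mult_zero_right diff_zero add_0_right minus_zero)
  then show ?thesis using assms(1) by simp
qed

lemma det3_nonzero_left_kernel:
  fixes m11 m12 m13 m21 m22 m23 m31 m32 m33 x1 x2 x3 :: "'a::field"
  assumes "det3 m11 m12 m13 m21 m22 m23 m31 m32 m33 \<noteq> 0"
    and "x1 * m11 + x2 * m21 + x3 * m31 = 0"
    and "x1 * m12 + x2 * m22 + x3 * m32 = 0"
    and "x1 * m13 + x2 * m23 + x3 * m33 = 0"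
  shows "x1 = 0 \<and> x2 = 0 \<and> x3 = 0"
  using det3_nonzero_kernel[of m11 m21 m31 m12 m22 m32 m13 m23 m33 x1 x2 x3] assms
  by (simp add: det3_transpose)

lemma det3_zero_left_kernel:
  fixes m11 m12 m13 m21 m22 m23 m31 m32 m33 :: "'a::field"
  assumes "det3 m11 m12 m13 m21 m22 m23 m31 m32 m33 = 0"
  obtains c1 c2 c3 where "c1 \<noteq> 0 \<or> c2 \<noteq> 0 \<or> c3 \<noteq> 0"
    "c1 * m11 + c2 * m21 + c3 * m31 = 0" "c1 * m12 + c2 * m22 + c3 * m32 = 0"
    "c1 * m13 + c2 * m23 + c3 * m33 = 0"
proof -
  define P where "P = (\<lambda>c1 c2 c3. c1 * m11 + c2 * m21 + c3 * m31 = 0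
     \<and> c1 * m12 + c2 * m22 + c3 * m32 = 0 \<and> c1 * m13 + c2 * m23 + c3 * m33 = 0)"
  have d: "m11 * (m22 * m33 - m23 * m32) - m12 * (m21 * m33 - m23 * m31) + m13 * (m21 * m32 - m22 * m31) = 0"
    using assms by (simp add: det3_def)
  \<comment> \<open>each column of the adjugate lies in the left kernel; if all vanish, the rows are proportional\<close>
  have "P (m22*m33 - m23*m32) (m13*m32 - m12*m33) (m12*m23 - m13*m22)"
    unfolding P_def by (intro conjI; (algebra | insert d, algebra))
  moreover have "P (m23*m31 - m21*m33) (m11*m33 - m13*m31) (m13*m21 - m11*m23)"
    unfolding P_def by (intro conjI; (algebra | insert d, algebra))
  moreover have "P (m21*m32 - m22*m31) (m12*m31 - m11*m32) (m11*m22 - m12*m21)"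
    unfolding P_def by (intro conjI; (algebra | insert d, algebra))
  moreover have "P m21 (-m11) 0" "P m22 (-m12) 0" "P m23 (-m13) 0"
    if "m11*m22 = m12*m21" "m11*m23 = m13*m21" "m12*m23 = m13*m22"
    using that unfolding P_def by (auto simp: algebra_simps)
  moreover have "P 1 0 0" if "m11 = 0" "m12 = 0" "m13 = 0"
    using that unfolding P_def by simp
  ultimately show ?thesis using that unfolding P_def
    by (metis eq_iff_diff_eq_0 mult.commute neg_equal_0_iff_equal zero_neq_one)
qed

lemma binary_form_det3:
  assumes "binary_form 1 m11" "binary_form 1 m12" "binary_form 1 m13" "binary_form 1 m21"
    "binary_form 1 m22" "binary_form 1 m23" "binary_form 1 m31" "binary_form 1 m32" "binary_form 1 m33"
  shows "binary_form 3 (\<lambda>s t. det3 (m11 s t) (m12 s t) (m13 s t) (m21 s t) (m22 s t) (m23 s t)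
    (m31 s t) (m32 s t) (m33 s t))"
proof -
  have minor: "binary_form 2 (\<lambda>s t. f s t * g s t - h s t * k s t)"
    if "binary_form 1 f" "binary_form 1 g" "binary_form 1 h" "binary_form 1 k" for f g h k
    using binary_form_diff[OF binary_form_mult[OF that(1,2)] binary_form_mult[OF that(3,4)]]
    by (simp add: numeral_2_eq_2)
  have cofactor: "binary_form 3 (\<lambda>s t. f s t * g s t)" if "binary_form 1 f" "binary_form 2 g" for f g
    using binary_form_mult[OF that] by (simp add: numeral_3_eq_3)
  show ?thesis unfolding det3_def
    by (intro binary_form_add binary_form_diff cofactor minor assms)
qed

lemma orthogonal_pair_exists:
  fixes l1 l2 l3 :: "'a::field"
  obtains a1 a2 a3 b1 b2 b3 where "a1 * l1 + a2 * l2 + a3 * l3 = 0" "b1 * l1 + b2 * l2 + b3 * l3 = 0"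
    "\<And>e1 e2. e1 * a1 + e2 * b1 = 0 \<Longrightarrow> e1 * a2 + e2 * b2 = 0 \<Longrightarrow> e1 * a3 + e2 * b3 = 0
       \<Longrightarrow> e1 = 0 \<and> e2 = 0"
proof (cases "l1 = 0")
  case False
  then show ?thesis using that[of l2 "- l1" 0 l3 0 "- l1"] by (auto simp: algebra_simps)
next
  case True
  show ?thesis
  proof (cases "l2 = 0")
    case False
    then show ?thesis using True that[of 1 0 0 0 l3 "- l2"] by (auto simp: algebra_simps)
  qed (use True that[of 1 0 0 0 1 0] in auto)
qed

lemma orthogonal_to_two_imp_cross_multiple:
  fixes r1 r2 r3 s1 s2 s3 v1 v2 v3 :: "'a::field"
  assumes "r1 * v1 + r2 * v2 + r3 * v3 = 0" "s1 * v1 + s2 * v2 + s3 * v3 = 0"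
    and cross: "r2 * s3 - r3 * s2 \<noteq> 0"
  shows "\<exists>l. v1 = l * (r2 * s3 - r3 * s2) \<and> v2 = l * (r3 * s1 - r1 * s3) \<and> v3 = l * (r1 * s2 - r2 * s1)"
proof -
  have "v2 * (r2 * s3 - r3 * s2) - v1 * (r3 * s1 - r1 * s3)
      = s3 * (r1 * v1 + r2 * v2 + r3 * v3) - r3 * (s1 * v1 + s2 * v2 + s3 * v3)"
    "v3 * (r2 * s3 - r3 * s2) - v1 * (r1 * s2 - r2 * s1)
      = r2 * (s1 * v1 + s2 * v2 + s3 * v3) - s2 * (r1 * v1 + r2 * v2 + r3 * v3)"
    by algebra+
  then have "v2 * (r2 * s3 - r3 * s2) = v1 * (r3 * s1 - r1 * s3)"
    "v3 * (r2 * s3 - r3 * s2) = v1 * (r1 * s2 - r2 * s1)"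
    using assms(1,2) by simp_all
  then show ?thesis using cross
    by (intro exI[of _ "v1 / (r2 * s3 - r3 * s2)"]) (auto simp: field_simps)
qed

text \<open>The conic W1 u v + W2 u w + W3 v w = 0 through the three coordinate points, parametrised by
  the lines through its point (0 : 1 : 0).\<close>
lemma conic_parametrization:
  fixes W1 W2 W3 s t :: "'a::field"
  defines "u \<equiv> (s * t) * (W2 * W3) - (t * t) * (W2 * W1)"
    and "v \<equiv> (s * t) * (- (W2 * W2))"
    and "w \<equiv> (s * t) * (W2 * W1) - (s * s) * (W2 * W3)"
  shows "W1 * (u * v) + W2 * (u * w) + W3 * (v * w) = 0"
    and "W1 \<noteq> 0 \<Longrightarrow> W2 \<noteq> 0 \<Longrightarrow> W3 \<noteq> 0 \<Longrightarrow> s \<noteq> 0 \<or> t \<noteq> 0 \<Longrightarrow> u \<noteq> 0 \<or> v \<noteq> 0 \<or> w \<noteq> 0"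
  unfolding u_def v_def w_def by algebra auto

section \<open>Linear algebra in five coordinates\<close>

definition dot :: "(nat \<Rightarrow> 'a::field) \<Rightarrow> (nat \<Rightarrow> 'a) \<Rightarrow> 'a" where
  "dot l y = (\<Sum>k<5. l k * y k)"

definition bilin :: "(nat \<Rightarrow> nat \<Rightarrow> 'a::field) \<Rightarrow> (nat \<Rightarrow> 'a) \<Rightarrow> (nat \<Rightarrow> 'a) \<Rightarrow> 'a" where
  "bilin A x y = (\<Sum>i<5. \<Sum>j<5. A i j * x i * y j)"

definition polar :: "(nat \<Rightarrow> nat \<Rightarrow> 'a::field) \<Rightarrow> (nat \<Rightarrow> 'a) \<Rightarrow> (nat \<Rightarrow> 'a) \<Rightarrow> 'a" where
  "polar A x y = bilin A x y + bilin A y x"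

lemma quad_eq_bilin: "quad A x = bilin A x x"
  by (simp add: quad_def bilin_def)

lemma polar_commute: "polar A x y = polar A y x"
  by (simp add: polar_def)

lemma polar_self: "polar A x x = 2 * quad A x"
  by (simp add: polar_def quad_eq_bilin)

lemma bilin_lincomb_left:
  "bilin A (\<lambda>k. u * a k + v * b k + w * c k) y = u * bilin A a y + v * bilin A b y + w * bilin A c y"
  by (simp add: bilin_def algebra_simps sum.distrib sum_distrib_left)

lemma bilin_lincomb_right:
  "bilin A y (\<lambda>k. u * a k + v * b k + w * c k) = u * bilin A y a + v * bilin A y b + w * bilin A y c"
  by (simp add: bilin_def algebra_simps sum.distrib sum_distrib_left)

lemma polar_lincomb_left:
  "polar A (\<lambda>k. u * a k + v * b k + w * c k) y = u * polar A a y + v * polar A b y + w * polar A c y"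
  unfolding polar_def bilin_lincomb_left bilin_lincomb_right by (simp add: algebra_simps)

lemma quad_lincomb:
  "quad A (\<lambda>k. u * a k + v * b k + w * c k) = u^2 * quad A a + v^2 * quad A b + w^2 * quad A c
     + u * v * polar A a b + u * w * polar A a c + v * w * polar A b c"
  unfolding quad_eq_bilin polar_def bilin_lincomb_left bilin_lincomb_right
  by (simp add: algebra_simps power2_eq_square)

lemma quad_lincomb2:
  "quad A (\<lambda>k. u * a k + v * b k) = u^2 * quad A a + v^2 * quad A b + u * v * polar A a b"
  using quad_lincomb[of A u a v b 0 b] by simp

lemma polar_lincomb2_left:
  "polar A (\<lambda>k. u * a k + v * b k) y = u * polar A a y + v * polar A b y"
  using polar_lincomb_left[of A u a v b 0 b] by simp

lemma quad_cong: "(\<And>k. k < 5 \<Longrightarrow> x k = y k) \<Longrightarrow> quad A x = quad A y"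
  unfolding quad_def by (intro sum.cong refl) auto

lemma quad_grad_lincomb:
  "quad_grad A (\<lambda>k. u * a k + v * b k + w * c k) i
     = u * quad_grad A a i + v * quad_grad A b i + w * quad_grad A c i"
  by (simp add: quad_grad_def algebra_simps sum.distrib sum_distrib_left)

lemma quad_grad_lincomb2:
  "quad_grad A (\<lambda>k. u * a k + v * b k) i = u * quad_grad A a i + v * quad_grad A b i"
  using quad_grad_lincomb[of A u a v b 0 b] by simp

lemma dot_quad_grad: "dot (quad_grad A x) y = polar A x y"
proof -
  have "dot (quad_grad A x) y = (\<Sum>k<5. \<Sum>j<5. A k j * y k * x j) + (\<Sum>k<5. \<Sum>j<5. A j k * x j * y k)"
    unfolding dot_def quad_grad_def sum.distrib[symmetric] sum_distrib_right
    by (intro sum.cong refl) (simp add: algebra_simps)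
  also have "(\<Sum>k<5. \<Sum>j<5. A j k * x j * y k) = bilin A x y"
    unfolding bilin_def by (subst sum.swap) simp
  finally show ?thesis by (simp add: polar_def bilin_def)
qed

lemma dot_lincomb_left:
  "dot (\<lambda>k. u * a k + v * b k + w * c k) y = u * dot a y + v * dot b y + w * dot c y"
  by (simp add: dot_def algebra_simps sum.distrib sum_distrib_left)

lemma dot_cong: "(\<And>k. k < 5 \<Longrightarrow> x k = y k) \<Longrightarrow> dot l x = dot l y"
  unfolding dot_def by (rule sum.cong) auto

lemma dot_diff_left: "dot (\<lambda>k. a k - r * b k) y = dot a y - r * dot b y"
  by (simp add: dot_def algebra_simps sum_subtractf sum_distrib_left)

lemma dot_diff_right: "dot l (\<lambda>k. a k - r * b k) = dot l a - r * dot l b"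
  by (simp add: dot_def algebra_simps sum_subtractf sum_distrib_left)

lemma dot_sum_right: "dot l (\<lambda>k. \<Sum>i\<in>I. c i * v i k) = (\<Sum>i\<in>I. c i * dot l (v i))"
  by (simp add: dot_def sum_distrib_left algebra_simps sum.swap[of _ I])

lemma dot_unit_left:
  assumes "k0 < 5" shows "dot (\<lambda>k. if k = k0 then 1 else 0) y = y k0"
proof -
  have "dot (\<lambda>k. if k = k0 then 1 else 0) y = (\<Sum>k<5. if k = k0 then y k else 0)"
    unfolding dot_def by (rule sum.cong) auto
  then show ?thesis using assms by simp
qed

lemma quad_product: "quad (\<lambda>i k. l i * m k) x = dot l x * dot m x"
  by (simp add: quad_def dot_def sum_product algebra_simps)

lemma quad_sum: "quad (\<lambda>a b. \<Sum>j\<in>J. f j * M j a b) x = (\<Sum>j\<in>J. f j * quad (M j) x)"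
  unfolding quad_def by (simp add: sum_distrib_left sum_distrib_right mult.assoc sum.swap[of _ J])

definition in_span :: "('i \<Rightarrow> nat \<Rightarrow> 'a::field) \<Rightarrow> 'i set \<Rightarrow> (nat \<Rightarrow> 'a) \<Rightarrow> bool" where
  "in_span v I y \<longleftrightarrow> (\<exists>c. \<forall>k<5. y k = (\<Sum>i\<in>I. c i * v i k))"

definition hyperplane_separates :: "('i \<Rightarrow> nat \<Rightarrow> 'a::field) \<Rightarrow> 'i set \<Rightarrow> (nat \<Rightarrow> 'a) \<Rightarrow> bool" where
  "hyperplane_separates v I y \<longleftrightarrow> (\<exists>l. (\<forall>i\<in>I. dot l (v i) = 0) \<and> dot l y \<noteq> 0)"

lemma in_span_insert:
  assumes "finite I" "a \<notin> I" "in_span v I (\<lambda>k. y k - t * v a k)"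
  shows "in_span v (insert a I) y"
proof -
  obtain c where c: "\<forall>k<5. y k - t * v a k = (\<Sum>i\<in>I. c i * v i k)"
    using assms(3) unfolding in_span_def by blast
  have "(\<Sum>i\<in>I. (c(a := t)) i * v i k) = (\<Sum>i\<in>I. c i * v i k)" for k
    using assms(2) by (auto intro!: sum.cong)
  then have "\<forall>k<5. y k = (\<Sum>i\<in>insert a I. (c(a := t)) i * v i k)"
    using c assms(1,2) by (simp add: algebra_simps)
  then show ?thesis unfolding in_span_def by blast
qed

lemma hyperplane_separates_insert_dependent:
  assumes "in_span v I (v a)" "hyperplane_separates v I y"
  shows "hyperplane_separates v (insert a I) y"
proof -
  obtain c where c: "\<forall>k<5. v a k = (\<Sum>i\<in>I. c i * v i k)"
    using assms(1) unfolding in_span_def by blast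
  obtain l where l: "\<forall>i\<in>I. dot l (v i) = 0" "dot l y \<noteq> 0"
    using assms(2) unfolding hyperplane_separates_def by blast
  have "dot l (v a) = dot l (\<lambda>k. \<Sum>i\<in>I. c i * v i k)"
    using c by (intro dot_cong) auto
  also have "\<dots> = 0"
    using l(1) by (simp add: dot_sum_right)
  finally show ?thesis using l unfolding hyperplane_separates_def by auto
qed

lemma hyperplane_separates_insert_independent:
  assumes l1: "\<forall>i\<in>I. dot l1 (v i) = 0" "dot l1 (v a) \<noteq> 0"
    and "hyperplane_separates v I (\<lambda>k. y k - dot l1 y / dot l1 (v a) * v a k)"
  shows "hyperplane_separates v (insert a I) y"
proof -
  define y' where "y' = (\<lambda>k. y k - dot l1 y / dot l1 (v a) * v a k)"
  obtain l' where l': "\<forall>i\<in>I. dot l' (v i) = 0" "dot l' y' \<noteq> 0"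
    using assms(3) unfolding hyperplane_separates_def y'_def by blast
  \<comment> \<open>correct l' by a multiple of l1 so that it also kills v a\<close>
  define l where "l = (\<lambda>k. l' k - dot l' (v a) / dot l1 (v a) * l1 k)"
  have la: "dot l (v a) = 0"
    using l1(2) unfolding l_def dot_diff_left by simp
  have "\<forall>i\<in>I. dot l (v i) = 0"
    using l'(1) l1(1) unfolding l_def dot_diff_left by simp
  moreover have "dot l y = dot l y'"
    using la unfolding y'_def dot_diff_right by simp
  moreover have "dot l y' = dot l' y'"
    using l1(2) unfolding l_def dot_diff_left y'_def dot_diff_right by simp
  ultimately show ?thesis using la l'(2) unfolding hyperplane_separates_def by auto
qed

lemma hyperplane_separates_or_in_span_insert:
  assumes "finite I" "a \<notin> I"
    and IH: "\<And>y. hyperplane_separates v I y \<or> in_span v I y"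
  shows "hyperplane_separates v (insert a I) y \<or> in_span v (insert a I) y"
proof (cases "in_span v I (v a)")
  case True
  have "in_span v (insert a I) y" if "in_span v I y"
    using in_span_insert[OF assms(1,2), of v y 0] that by simp
  then show ?thesis using IH[of y] hyperplane_separates_insert_dependent[OF True] by blast
next
  case False
  then obtain l1 where l1: "\<forall>i\<in>I. dot l1 (v i) = 0" "dot l1 (v a) \<noteq> 0"
    using IH unfolding hyperplane_separates_def by blast
  from IH[of "\<lambda>k. y k - dot l1 y / dot l1 (v a) * v a k"] show ?thesis
    using hyperplane_separates_insert_independent[OF l1] in_span_insert[OF assms(1,2)] by blast
qed

lemma hyperplane_separates_or_in_span:
  assumes "finite I"
  shows "hyperplane_separates v I y \<or> in_span v I y"
  using assms
proof (induction I arbitrary: y rule: finite_induct)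
  case empty
  show ?case
  proof (cases "\<forall>k<5. y k = 0")
    case True
    then show ?thesis unfolding in_span_def by simp
  next
    case False
    then obtain k0 where "k0 < 5" "y k0 \<noteq> 0" by auto
    then have "dot (\<lambda>k. if k = k0 then 1 else 0) y \<noteq> 0" by (simp add: dot_unit_left)
    then show ?thesis unfolding hyperplane_separates_def by blast
  qed
next
  case (insert a I)
  then show ?case by (intro hyperplane_separates_or_in_span_insert)
qed

lemma lessThan5_split2:
  assumes "k1 < 5" "k2 < (5::nat)" "k1 \<noteq> k2"
  obtains r1 r2 r3 where "distinct [k1, k2, r1, r2, r3]" "{..<5} = {k1, k2, r1, r2, r3}"
proof -
  have "card ({..<5::nat} - {k1, k2}) = 3" using assms by (simp add: card_Diff_subset)
  then obtain r1 r2 r3 where "{..<5} - {k1, k2} = {r1, r2, r3}" "distinct [r1, r2, r3]"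
    by (auto simp: card_3_iff)
  then show ?thesis using that[of r1 r2 r3] assms by (auto simp: insert_commute)
qed

lemma lessThan5_split3:
  assumes "k1 < 5" "k2 < 5" "k3 < (5::nat)" "distinct [k1, k2, k3]"
  obtains r1 r2 where "distinct [k1, k2, k3, r1, r2]" "{..<5} = {k1, k2, k3, r1, r2}"
proof -
  have "card ({..<5::nat} - {k1, k2, k3}) = 2" using assms by (simp add: card_Diff_subset)
  then obtain r1 r2 where "{..<5} - {k1, k2, k3} = {r1, r2}" "r1 \<noteq> r2"
    by (auto simp: card_2_iff)
  then show ?thesis using that[of r1 r2] assms by (auto simp: insert_commute)
qed

lemma linear_form_vanishes_2:
  assumes cover: "{..<5::nat} = {k1, k2, r1, r2, r3}" and "distinct [k1, k2, r1, r2, r3]"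
    and "l r1 = 0" "l r2 = 0" "l r3 = 0" "dot l a = 0" "dot l b = 0"
    and minor: "a k1 * b k2 - a k2 * b k1 \<noteq> 0"
  shows "\<forall>k<5. l k = 0"
proof -
  have "dot l y = l k1 * y k1 + l k2 * y k2" for y
    using assms(2-5) by (simp only: dot_def cover) simp
  then have a: "l k1 * a k1 + l k2 * a k2 = 0" and b: "l k1 * b k1 + l k2 * b k2 = 0"
    using assms(6,7) by simp_all
  have "l k1 * (a k1 * b k2 - a k2 * b k1) = (l k1 * a k1 + l k2 * a k2) * b k2 - (l k1 * b k1 + l k2 * b k2) * a k2"
    "l k2 * (a k1 * b k2 - a k2 * b k1) = (l k1 * b k1 + l k2 * b k2) * a k1 - (l k1 * a k1 + l k2 * a k2) * b k1"
    by (simp_all add: algebra_simps)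
  then have "l k1 = 0" "l k2 = 0" using a b minor by simp_all
  then show ?thesis using assms(3-5) cover by (metis empty_iff insert_iff lessThan_iff)
qed

lemma linear_form_vanishes_3:
  assumes cover: "{..<5::nat} = {k1, k2, k3, r1, r2}" and "distinct [k1, k2, k3, r1, r2]"
    and "l r1 = 0" "l r2 = 0" "dot l a = 0" "dot l b = 0" "dot l c = 0"
    and "det3 (a k1) (a k2) (a k3) (b k1) (b k2) (b k3) (c k1) (c k2) (c k3) \<noteq> 0"
  shows "\<forall>k<5. l k = 0"
proof -
  have "dot l y = l k1 * y k1 + l k2 * y k2 + l k3 * y k3" for y
    using assms(2-4) by (simp only: dot_def cover) simp
  then have "l k1 * a k1 + l k2 * a k2 + l k3 * a k3 = 0" "l k1 * b k1 + l k2 * b k2 + l k3 * b k3 = 0"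
    "l k1 * c k1 + l k2 * c k2 + l k3 * c k3 = 0"
    using assms(5-7) by simp_all
  then have "l k1 = 0 \<and> l k2 = 0 \<and> l k3 = 0"
    using det3_nonzero_kernel assms(8) by blast
  then show ?thesis using assms(3,4) cover by (metis empty_iff insert_iff lessThan_iff)
qed

lemma minor2_nonzero:
  assumes "nonzero5 a" "\<not> proj_eq b a"
  obtains k1 k2 where "k1 < 5" "k2 < 5" "a k1 * b k2 - a k2 * b k1 \<noteq> 0"
proof -
  obtain j where j: "j < 5" "a j \<noteq> 0" using assms(1) unfolding nonzero5_def by auto
  have "\<exists>k<5. a j * b k - a k * b j \<noteq> 0"
  proof (rule ccontr)
    assume "\<not> ?thesis"
    then have "b k = (b j / a j) * a k" if "k < 5" for k
      using that j(2) by (simp add: divide_simps mult.commute)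
    then show False using assms(2) unfolding proj_eq_def by blast
  qed
  then show ?thesis using that j(1) by blast
qed

lemma minor3_nonzero:
  fixes a b c :: "nat \<Rightarrow> 'a::field"
  assumes "k1 < 5" "k2 < 5" and minor: "a k1 * b k2 - a k2 * b k1 \<noteq> 0"
    and not_span: "\<nexists>\<alpha> \<beta>. \<forall>k<5. c k = \<alpha> * a k + \<beta> * b k"
  obtains k3 where "k3 < 5" "distinct [k1, k2, k3]"
    "det3 (a k1) (a k2) (a k3) (b k1) (b k2) (b k3) (c k1) (c k2) (c k3) \<noteq> 0"
proof -
  let ?m = "a k1 * b k2 - a k2 * b k1"
  let ?\<alpha> = "c k1 * b k2 - c k2 * b k1" and ?\<beta> = "a k1 * c k2 - a k2 * c k1"
  \<comment> \<open>expansion of the determinant along its last column\<close>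
  have det: "det3 (a k1) (a k2) (a k3) (b k1) (b k2) (b k3) (c k1) (c k2) (c k3)
      = ?m * c k3 - ?\<alpha> * a k3 - ?\<beta> * b k3" for k3
    unfolding det3_def by algebra
  have "\<exists>k3<5. ?m * c k3 - ?\<alpha> * a k3 - ?\<beta> * b k3 \<noteq> 0"
  proof (rule ccontr)
    assume all_zero: "\<not> ?thesis"
    have "c k = (?\<alpha> / ?m) * a k + (?\<beta> / ?m) * b k" if "k < 5" for k
    proof -
      have "?m * c k - ?\<alpha> * a k - ?\<beta> * b k = 0" using all_zero that by blast
      then have "?m * c k = ?\<alpha> * a k + ?\<beta> * b k" by (simp add: algebra_simps)
      then show ?thesis using minor by (simp add: divide_simps mult.commute)
    qed
    then show False using not_span by blast
  qed
  then obtain k3 where k3: "k3 < 5" "?m * c k3 - ?\<alpha> * a k3 - ?\<beta> * b k3 \<noteq> 0" by blast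
  moreover have "k3 \<noteq> k1" "k3 \<noteq> k2"
    using k3(2) by (auto simp: algebra_simps)
  ultimately show ?thesis using that minor det by auto
qed

lemma nonzero5_lincomb2:
  assumes "k1 < 5" "k2 < 5" "a k1 * b k2 - a k2 * b k1 \<noteq> 0" "s \<noteq> 0 \<or> t \<noteq> 0"
  shows "nonzero5 (\<lambda>k. s * a k + t * b k)"
proof (rule ccontr)
  assume "\<not> ?thesis"
  then have "s * a k1 + t * b k1 = 0" "s * a k2 + t * b k2 = 0"
    using assms(1,2) unfolding nonzero5_def by auto
  moreover have "s * (a k1 * b k2 - a k2 * b k1) = (s * a k1 + t * b k1) * b k2 - (s * a k2 + t * b k2) * b k1"
    "t * (a k1 * b k2 - a k2 * b k1) = (s * a k2 + t * b k2) * a k1 - (s * a k1 + t * b k1) * a k2"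
    by (simp_all add: algebra_simps)
  ultimately show False using assms(3,4) by simp
qed

definition proj_distinct :: "(nat \<Rightarrow> 'a::field) \<Rightarrow> (nat \<Rightarrow> 'a) \<Rightarrow> bool" where
  "proj_distinct x y \<longleftrightarrow> \<not> proj_eq x y \<and> \<not> proj_eq y x"

lemma proj_distinct_commute: "proj_distinct x y \<longleftrightarrow> proj_distinct y x"
  by (auto simp: proj_distinct_def)

section \<open>Quadrics through collinear and coplanar points\<close>

lemma polar_zero_if_collinear:
  assumes "quad Q a = 0" "quad Q b = 0" "quad Q (\<lambda>k. \<alpha> * a k + \<beta> * b k) = 0" "\<alpha> \<noteq> 0" "\<beta> \<noteq> 0"
  shows "polar Q a b = 0"
  using assms by (simp add: quad_lincomb2)

definition quad_restricts_to_conic ::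
    "(nat \<Rightarrow> nat \<Rightarrow> 'a::field) \<Rightarrow> (nat \<Rightarrow> 'a) \<Rightarrow> (nat \<Rightarrow> 'a) \<Rightarrow> (nat \<Rightarrow> 'a) \<Rightarrow> 'a \<Rightarrow> 'a \<Rightarrow> 'a \<Rightarrow> 'a \<Rightarrow> bool"
  where "quad_restricts_to_conic Q A B C W1 W2 W3 l \<longleftrightarrow> quad Q A = 0 \<and> quad Q B = 0 \<and> quad Q C = 0
     \<and> polar Q A B = l * W1 \<and> polar Q A C = l * W2 \<and> polar Q B C = l * W3"

lemma quad_on_plane:
  assumes "quad_restricts_to_conic Q A B C W1 W2 W3 l"
  shows "quad Q (\<lambda>k. u * A k + v * B k + w * C k) = l * (W1 * (u * v) + W2 * (u * w) + W3 * (v * w))"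
  using assms unfolding quad_restricts_to_conic_def quad_lincomb by (simp add: algebra_simps)

lemma quad_restricts_to_conic_if_coplanar_five:
  fixes d1 d2 d3 p1 p2 p3 :: "'a::field"
  defines "W1 \<equiv> (d1 * d3) * (p2 * p3) - (d2 * d3) * (p1 * p3)"
    and "W2 \<equiv> (d2 * d3) * (p1 * p2) - (d1 * d2) * (p2 * p3)"
    and "W3 \<equiv> (d1 * d2) * (p1 * p3) - (d1 * d3) * (p1 * p2)"
  assumes "quad Q A = 0" "quad Q B = 0" "quad Q C = 0" "quad Q D = 0" "quad Q P = 0"
    and D: "\<forall>k<5. D k = d1 * A k + d2 * B k + d3 * C k"
    and P: "\<forall>k<5. P k = p1 * A k + p2 * B k + p3 * C k"
    and "W1 \<noteq> 0"
  shows "\<exists>l. quad_restricts_to_conic Q A B C W1 W2 W3 l"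
proof -
  have "quad Q (\<lambda>k. d1 * A k + d2 * B k + d3 * C k) = quad Q D"
    "quad Q (\<lambda>k. p1 * A k + p2 * B k + p3 * C k) = quad Q P"
    using D P by (simp_all cong: quad_cong)
  then have "(d1 * d2) * polar Q A B + (d1 * d3) * polar Q A C + (d2 * d3) * polar Q B C = 0"
    "(p1 * p2) * polar Q A B + (p1 * p3) * polar Q A C + (p2 * p3) * polar Q B C = 0"
    using assms(4-8) unfolding quad_lincomb by simp_all
  \<comment> \<open>so the polar values are a multiple of the cross product of these two coefficient vectors\<close>
  then obtain l where "polar Q A B = l * W1" "polar Q A C = l * W2" "polar Q B C = l * W3"
    using orthogonal_to_two_imp_cross_multiple \<open>W1 \<noteq> 0\<close> unfolding W1_def W2_def W3_def by blast
  then show ?thesis using assms(4-6) unfolding quad_restricts_to_conic_def by blast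
qed

lemma indep_on_quadrics_if_separating_quadrics:
  assumes "\<And>j. j < n \<Longrightarrow> \<exists>M. quad M (p j) \<noteq> 0 \<and> (\<forall>i<n. i \<noteq> j \<longrightarrow> quad M (p i) = 0)"
  shows "indep_on_quadrics n p"
  unfolding indep_on_quadrics_def
proof
  fix c :: "nat \<Rightarrow> 'a"
  have "\<forall>j. \<exists>M. j < n \<longrightarrow> quad M (p j) \<noteq> 0 \<and> (\<forall>i<n. i \<noteq> j \<longrightarrow> quad M (p i) = 0)"
    using assms by blast
  then obtain M where M: "\<And>j. j < n \<Longrightarrow> quad (M j) (p j) \<noteq> 0"
    "\<And>i j. i < n \<Longrightarrow> j < n \<Longrightarrow> i \<noteq> j \<Longrightarrow> quad (M j) (p i) = 0"
    by metis
  define A where "A = (\<lambda>a b. \<Sum>j<n. (c j / quad (M j) (p j)) * M j a b)"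
  have "quad A (p i) = c i" if "i < n" for i
  proof -
    have "(c j / quad (M j) (p j)) * quad (M j) (p i) = (if j = i then c i else 0)" if "j < n" for j
      using M(1)[OF that] M(2)[OF \<open>i < n\<close> that] by auto
    then have "quad A (p i) = (\<Sum>j<n. if j = i then c i else 0)"
      unfolding A_def quad_sum by (intro sum.cong) auto
    then show ?thesis using that by simp
  qed
  then show "\<exists>A. \<forall>i<n. quad A (p i) = c i" by blast
qed

lemma card_le_2_if_subset_pair:
  assumes "S \<subseteq> {u, v}"
  shows "card S \<le> 2"
proof -
  have "card S \<le> card {u, v}" using assms by (intro card_mono) auto
  also have "\<dots> \<le> 2" by (cases "u = v") auto
  finally show ?thesis .
qed

lemma split_six:
  assumes "distinct [a, b, c, d, e, f]"
    and H: "\<And>x y z w. {x, y, z, w} \<subseteq> {a, b, c, d, e, f} \<Longrightarrow> distinct [x, y, z, w] \<Longrightarrow> good {x, y, z} \<or> good {x, y, w}"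
  obtains T where "T \<subseteq> {a, b, c, d, e, f}" "good T" "good ({a, b, c, d, e, f} - T)"
proof -
  have split: "{a, b, c, d, e, f} - {a, b, d} = {c, e, f}" "{a, b, c, d, e, f} - {a, b, e} = {c, d, f}"
    "{a, b, c, d, e, f} - {a, b, c} = {d, e, f}" "{a, b, c, d, e, f} - {d, e, a} = {b, c, f}"
    "{a, b, c, d, e, f} - {d, e, b} = {a, c, f}"
    using assms(1) by auto
  \<comment> \<open>if {a, b, c} is not good, then {a, b, d} and {a, b, e} are, and so is one of their
     complements {c, e, f}, {c, d, f}, which share two points\<close>
  consider "good {a, b, c}" "good {d, e, f}" | "\<not> good {a, b, c}" | "\<not> good {d, e, f}" by blast
  then show ?thesis
  proof cases
    case 1
    then show ?thesis using that[of "{a, b, c}"] split by auto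
  next
    case 2
    then have "good {a, b, d}" "good {a, b, e}" using H[of a b c d] H[of a b c e] assms(1) by auto
    moreover have "good {c, e, f} \<or> good {c, d, f}"
      using H[of f c e d] assms(1) by (auto simp: insert_commute)
    ultimately show ?thesis using that[of "{a, b, d}"] that[of "{a, b, e}"] split by auto
  next
    case 3
    then have "good {d, e, a}" "good {d, e, b}" using H[of d e f a] H[of d e f b] assms(1) by auto
    moreover have "good {b, c, f} \<or> good {a, c, f}"
      using H[of c f b a] assms(1) by (auto simp: insert_commute)
    ultimately show ?thesis using that[of "{d, e, a}"] that[of "{d, e, b}"] split by auto
  qed
qed

locale canonical_genus5_curve =
  fixes Q1 Q2 Q3 :: "nat \<Rightarrow> nat \<Rightarrow> 'a::field"
  assumes alg_closed: "alg_closed_field TYPE('a)"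
    and smooth: "smooth_ci_curve Q1 Q2 Q3"
begin

section \<open>Lines and planes through points of the curve\<close>

abbreviation X :: "(nat \<Rightarrow> 'a) set" where
  "X \<equiv> cone3 Q1 Q2 Q3"

definition grad_comb :: "'a \<Rightarrow> 'a \<Rightarrow> 'a \<Rightarrow> (nat \<Rightarrow> 'a) \<Rightarrow> nat \<Rightarrow> 'a" where
  "grad_comb c1 c2 c3 x k = c1 * quad_grad Q1 x k + c2 * quad_grad Q2 x k + c3 * quad_grad Q3 x k"

lemma mem_X_iff: "x \<in> X \<longleftrightarrow> nonzero5 x \<and> quad Q1 x = 0 \<and> quad Q2 x = 0 \<and> quad Q3 x = 0"
  by (simp add: cone3_def)

lemma grad_comb_vanishes_imp_trivial:
  assumes "x \<in> X" "\<forall>k<5. grad_comb c1 c2 c3 x k = 0"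
  shows "c1 = 0 \<and> c2 = 0 \<and> c3 = 0"
  using smooth assms unfolding smooth_ci_curve_def grad_comb_def by blast

lemma dot_grad_comb: "dot (grad_comb c1 c2 c3 x) y = c1 * polar Q1 x y + c2 * polar Q2 x y + c3 * polar Q3 x y"
proof -
  have "grad_comb c1 c2 c3 x = (\<lambda>k. c1 * quad_grad Q1 x k + c2 * quad_grad Q2 x k + c3 * quad_grad Q3 x k)"
    by (simp add: grad_comb_def fun_eq_iff)
  then show ?thesis by (simp add: dot_lincomb_left dot_quad_grad)
qed

lemma grad_comb_lincomb:
  "grad_comb c1 c2 c3 (\<lambda>k. u * a k + v * b k + w * c k) r
     = u * grad_comb c1 c2 c3 a r + v * grad_comb c1 c2 c3 b r + w * grad_comb c1 c2 c3 c r"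
  unfolding grad_comb_def quad_grad_lincomb by (simp add: algebra_simps)

text \<open>The polarity hypotheses say that the line through a and b lies in X.  On the three
  coordinates complementary to a nonzero 2x2 minor of (a, b), the gradients of the three quadrics
  along the line form a 3x3 matrix whose determinant is a binary cubic; at a zero of it some
  combination of the gradients vanishes on these coordinates and is orthogonal to the line, hence
  vanishes altogether.\<close>
lemma no_line_in_X:
  assumes "a \<in> X" "b \<in> X" "\<not> proj_eq b a"
    and polar: "polar Q1 a b = 0" "polar Q2 a b = 0" "polar Q3 a b = 0"
  shows False
proof -
  have "nonzero5 a" using assms(1) by (simp add: mem_X_iff)
  then obtain k1 k2 where kk: "k1 < 5" "k2 < 5" and minor: "a k1 * b k2 - a k2 * b k1 \<noteq> 0"
    using minor2_nonzero assms(3) by blast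
  then have "k1 \<noteq> k2" by auto
  then obtain r1 r2 r3 where rr: "distinct [k1, k2, r1, r2, r3]" "{..<5} = {k1, k2, r1, r2, r3}"
    using lessThan5_split2 kk by metis
  define g where "g Q s t r = s * quad_grad Q a r + t * quad_grad Q b r" for Q s t r
  have "binary_form 3 (\<lambda>s t. det3 (g Q1 s t r1) (g Q1 s t r2) (g Q1 s t r3)
     (g Q2 s t r1) (g Q2 s t r2) (g Q2 s t r3) (g Q3 s t r1) (g Q3 s t r2) (g Q3 s t r3))"
    unfolding g_def by (intro binary_form_det3 binary_form_linear)
  then obtain s t where st: "s \<noteq> 0 \<or> t \<noteq> 0" and det: "det3 (g Q1 s t r1) (g Q1 s t r2) (g Q1 s t r3)
     (g Q2 s t r1) (g Q2 s t r2) (g Q2 s t r3) (g Q3 s t r1) (g Q3 s t r2) (g Q3 s t r3) = 0"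
    by (rule binary_form_has_zero[OF alg_closed]) auto
  define x where "x = (\<lambda>k. s * a k + t * b k)"
  have polar_x: "polar Q x y = 0" if "quad Q a = 0" "quad Q b = 0" "polar Q a b = 0" "y = a \<or> y = b" for Q y
    using that by (auto simp: x_def polar_lincomb2_left polar_self polar_commute[of Q b a])
  have "x \<in> X"
    using nonzero5_lincomb2[OF kk minor st] assms(1,2) polar
    unfolding x_def mem_X_iff by (simp add: quad_lincomb2)
  have grad_x: "grad_comb c1 c2 c3 x r = c1 * g Q1 s t r + c2 * g Q2 s t r + c3 * g Q3 s t r" for c1 c2 c3 r
    by (simp add: grad_comb_def x_def quad_grad_lincomb2 g_def)
  obtain c1 c2 c3 where c: "c1 \<noteq> 0 \<or> c2 \<noteq> 0 \<or> c3 \<noteq> 0"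
    and "grad_comb c1 c2 c3 x r1 = 0" "grad_comb c1 c2 c3 x r2 = 0" "grad_comb c1 c2 c3 x r3 = 0"
    unfolding grad_x by (rule det3_zero_left_kernel[OF det])
  moreover have "dot (grad_comb c1 c2 c3 x) a = 0" "dot (grad_comb c1 c2 c3 x) b = 0"
    using assms(1,2) polar by (simp_all add: dot_grad_comb polar_x mem_X_iff)
  ultimately have "\<forall>k<5. grad_comb c1 c2 c3 x k = 0"
    using linear_form_vanishes_2[OF rr(2,1) _ _ _ _ _ minor] by blast
  then show False using grad_comb_vanishes_imp_trivial[OF \<open>x \<in> X\<close>] c by blast
qed

lemma no_three_collinear:
  assumes "a \<in> X" "b \<in> X" "p \<in> X" "proj_distinct a b" "proj_distinct a p" "proj_distinct b p"
    and p: "\<forall>k<5. p k = \<alpha> * a k + \<beta> * b k"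
  shows False
proof -
  have "\<alpha> \<noteq> 0" "\<beta> \<noteq> 0"
    using p assms(5,6) unfolding proj_distinct_def proj_eq_def by force+
  moreover have "quad Q (\<lambda>k. \<alpha> * a k + \<beta> * b k) = quad Q p" for Q
    using p by (intro quad_cong) simp
  ultimately have "polar Q a b = 0" if "quad Q a = 0" "quad Q b = 0" "quad Q p = 0" for Q
    using that polar_zero_if_collinear by metis
  then show False
    using no_line_in_X[OF assms(1,2)] assms(1-4) by (auto simp: mem_X_iff proj_distinct_def)
qed

lemma coplanar_coeffs_nonzero:
  assumes "A \<in> X" "B \<in> X" "C \<in> X" "E \<in> X"
    and "proj_distinct A B" "proj_distinct A C" "proj_distinct B C"
    and "proj_distinct A E" "proj_distinct B E" "proj_distinct C E"
    and E: "\<forall>k<5. E k = e1 * A k + e2 * B k + e3 * C k"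
  shows "e1 \<noteq> 0 \<and> e2 \<noteq> 0 \<and> e3 \<noteq> 0"
proof (intro conjI notI)
  assume "e1 = 0"
  then show False using no_three_collinear[of B C E e2 e3] assms by simp
next
  assume "e2 = 0"
  then show False using no_three_collinear[of A C E e1 e3] assms by simp
next
  assume "e3 = 0"
  then show False using no_three_collinear[of A B E e1 e2] assms by simp
qed

lemma coplanar_cross_nonzero:
  assumes "C \<in> X" "D \<in> X" "P \<in> X" "proj_distinct C D" "proj_distinct C P" "proj_distinct D P"
    and D: "\<forall>k<5. D k = d1 * A k + d2 * B k + d3 * C k"
    and P: "\<forall>k<5. P k = p1 * A k + p2 * B k + p3 * C k"
    and "p1 \<noteq> 0"
  shows "d1 * p2 - d2 * p1 \<noteq> 0"
proof
  assume "d1 * p2 - d2 * p1 = 0"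
  define \<kappa> where "\<kappa> = d1 / p1"
  have "d1 = \<kappa> * p1" "d2 = \<kappa> * p2"
    using \<open>d1 * p2 - d2 * p1 = 0\<close> \<open>p1 \<noteq> 0\<close> unfolding \<kappa>_def by (simp_all add: field_simps)
  then have "\<forall>k<5. D k = \<kappa> * P k + (d3 - \<kappa> * p3) * C k"
    using D P by (simp add: algebra_simps)
  then show False
    using no_three_collinear[of P C D \<kappa> "d3 - \<kappa> * p3"] assms by (simp add: proj_distinct_commute)
qed

lemma plane_conic_point_in_X:
  assumes "quad_restricts_to_conic Q1 A B C W1 W2 W3 l1" "quad_restricts_to_conic Q2 A B C W1 W2 W3 l2"
    "quad_restricts_to_conic Q3 A B C W1 W2 W3 l3"
    and "k1 < 5" "k2 < 5" "k3 < 5"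
    and minor: "det3 (A k1) (A k2) (A k3) (B k1) (B k2) (B k3) (C k1) (C k2) (C k3) \<noteq> 0"
    and "W1 * (u * v) + W2 * (u * w) + W3 * (v * w) = 0" "u \<noteq> 0 \<or> v \<noteq> 0 \<or> w \<noteq> 0"
  shows "(\<lambda>k. u * A k + v * B k + w * C k) \<in> X"
proof -
  have "nonzero5 (\<lambda>k. u * A k + v * B k + w * C k)"
    using det3_nonzero_left_kernel[OF minor, of u v w] assms(4-6,9) unfolding nonzero5_def by auto
  then show ?thesis using assms(1-3,8) by (simp add: mem_X_iff quad_on_plane)
qed

lemma dot_grad_comb_on_plane:
  assumes "quad_restricts_to_conic Q1 A B C W1 W2 W3 l1" "quad_restricts_to_conic Q2 A B C W1 W2 W3 l2"
    "quad_restricts_to_conic Q3 A B C W1 W2 W3 l3"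
    and c: "c1 * l1 + c2 * l2 + c3 * l3 = 0" and "Y \<in> {A, B, C}"
  shows "dot (grad_comb c1 c2 c3 (\<lambda>k. u * A k + v * B k + w * C k)) Y = 0"
proof -
  have "c1 * (l1 * W) + c2 * (l2 * W) + c3 * (l3 * W) = (c1 * l1 + c2 * l2 + c3 * l3) * W" for W
    by (simp add: algebra_simps)
  then have "c1 * (l1 * W) + c2 * (l2 * W) + c3 * (l3 * W) = 0" for W
    using c by simp
  then have "c1 * polar Q1 Z Y + c2 * polar Q2 Z Y + c3 * polar Q3 Z Y = 0" if "Z \<in> {A, B, C}" for Z
    using that \<open>Y \<in> {A, B, C}\<close> assms(1-3) unfolding quad_restricts_to_conic_def
    by (auto simp: polar_self polar_commute[of _ B A] polar_commute[of _ C A] polar_commute[of _ C B])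
  moreover have "dot (grad_comb c1 c2 c3 (\<lambda>k. u * A k + v * B k + w * C k)) Y
      = u * (c1 * polar Q1 A Y + c2 * polar Q2 A Y + c3 * polar Q3 A Y)
      + v * (c1 * polar Q1 B Y + c2 * polar Q2 B Y + c3 * polar Q3 B Y)
      + w * (c1 * polar Q1 C Y + c2 * polar Q2 C Y + c3 * polar Q3 C Y)"
    unfolding dot_grad_comb polar_lincomb_left by (simp add: algebra_simps)
  ultimately show ?thesis by simp
qed

lemma pencil_gradient_on_plane_trivial:
  assumes conic: "quad_restricts_to_conic Q1 A B C W1 W2 W3 l1" "quad_restricts_to_conic Q2 A B C W1 W2 W3 l2"
      "quad_restricts_to_conic Q3 A B C W1 W2 W3 l3"
    and cover: "{..<5::nat} = {k1, k2, k3, r1, r2}" "distinct [k1, k2, k3, r1, r2]"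
    and minor: "det3 (A k1) (A k2) (A k3) (B k1) (B k2) (B k3) (C k1) (C k2) (C k3) \<noteq> 0"
    and "(\<lambda>k. u * A k + v * B k + w * C k) \<in> X" "c1 * l1 + c2 * l2 + c3 * l3 = 0"
    and "grad_comb c1 c2 c3 (\<lambda>k. u * A k + v * B k + w * C k) r1 = 0"
      "grad_comb c1 c2 c3 (\<lambda>k. u * A k + v * B k + w * C k) r2 = 0"
  shows "c1 = 0 \<and> c2 = 0 \<and> c3 = 0"
proof -
  have "dot (grad_comb c1 c2 c3 (\<lambda>k. u * A k + v * B k + w * C k)) Y = 0" if "Y \<in> {A, B, C}" for Y
    by (rule dot_grad_comb_on_plane[OF conic assms(8) that])
  then have "\<forall>k<5. grad_comb c1 c2 c3 (\<lambda>k. u * A k + v * B k + w * C k) k = 0"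
    using assms(9,10) by (intro linear_form_vanishes_3[OF cover _ _ _ _ _ minor]) simp_all
  then show ?thesis using grad_comb_vanishes_imp_trivial assms(7) by blast
qed

lemma pencil_gradients_dependent_somewhere:
  assumes "binary_form 2 u" "binary_form 2 v" "binary_form 2 w"
  obtains s t e1 e2 where "s \<noteq> 0 \<or> t \<noteq> 0" "e1 \<noteq> 0 \<or> e2 \<noteq> 0"
    "grad_comb (e1 * a1 + e2 * b1) (e1 * a2 + e2 * b2) (e1 * a3 + e2 * b3)
       (\<lambda>k. u s t * A k + v s t * B k + w s t * C k) r1 = 0"
    "grad_comb (e1 * a1 + e2 * b1) (e1 * a2 + e2 * b2) (e1 * a3 + e2 * b3)
       (\<lambda>k. u s t * A k + v s t * B k + w s t * C k) r2 = 0"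
proof -
  define entry where
    "entry c1 c2 c3 r s t = grad_comb c1 c2 c3 (\<lambda>k. u s t * A k + v s t * B k + w s t * C k) r"
    for c1 c2 c3 r s t
  have "entry c1 c2 c3 r = (\<lambda>s t. u s t * grad_comb c1 c2 c3 A r + v s t * grad_comb c1 c2 c3 B r
      + w s t * grad_comb c1 c2 c3 C r)" for c1 c2 c3 r
    by (simp add: fun_eq_iff entry_def grad_comb_lincomb)
  then have entry_form: "binary_form 2 (entry c1 c2 c3 r)" for c1 c2 c3 r
    using assms by (simp only:) (intro binary_form_add binary_form_scale)
  have "binary_form 4 (\<lambda>s t. entry a1 a2 a3 r1 s t * entry b1 b2 b3 r2 s t
      - entry a1 a2 a3 r2 s t * entry b1 b2 b3 r1 s t)"
    using binary_form_diff[OF binary_form_mult binary_form_mult, OF entry_form entry_form entry_form entry_form]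
    by simp
  then obtain s t where st: "s \<noteq> 0 \<or> t \<noteq> 0" and det: "entry a1 a2 a3 r1 s t * entry b1 b2 b3 r2 s t
      - entry a1 a2 a3 r2 s t * entry b1 b2 b3 r1 s t = 0"
    by (rule binary_form_has_zero[OF alg_closed]) auto
  obtain e1 e2 where e: "e1 \<noteq> 0 \<or> e2 \<noteq> 0"
    "e1 * entry a1 a2 a3 r1 s t + e2 * entry b1 b2 b3 r1 s t = 0"
    "e1 * entry a1 a2 a3 r2 s t + e2 * entry b1 b2 b3 r2 s t = 0"
    using det2_zero_left_kernel[OF det] by metis
  moreover have "grad_comb (e1 * a1 + e2 * b1) (e1 * a2 + e2 * b2) (e1 * a3 + e2 * b3)
       (\<lambda>k. u s t * A k + v s t * B k + w s t * C k) r = e1 * entry a1 a2 a3 r s t + e2 * entry b1 b2 b3 r s t" for r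
    by (simp add: entry_def grad_comb_def algebra_simps)
  ultimately show ?thesis using that[OF st] by simp
qed

text \<open>If each quadric of the net restricts to a multiple l_i of one smooth conic on a plane, the
  pencil of combinations with coefficients orthogonal to l vanishes on the whole plane, so its
  gradients along the conic are orthogonal to the plane.  On the two coordinates complementary to a
  nonzero 3x3 minor, the gradients of two generators of the pencil form a 2x2 matrix whose
  determinant is a binary quartic on the parametrised conic; at a zero of it some gradient of the
  pencil vanishes.\<close>
lemma no_plane_conic_in_X:
  assumes conic: "quad_restricts_to_conic Q1 A B C W1 W2 W3 l1" "quad_restricts_to_conic Q2 A B C W1 W2 W3 l2"
      "quad_restricts_to_conic Q3 A B C W1 W2 W3 l3"
    and cover: "{..<5::nat} = {k1, k2, k3, r1, r2}" "distinct [k1, k2, k3, r1, r2]"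
    and minor: "det3 (A k1) (A k2) (A k3) (B k1) (B k2) (B k3) (C k1) (C k2) (C k3) \<noteq> 0"
    and "W1 \<noteq> 0" "W2 \<noteq> 0" "W3 \<noteq> 0"
  shows False
proof -
  obtain a1 a2 a3 b1 b2 b3 where a: "a1 * l1 + a2 * l2 + a3 * l3 = 0" and b: "b1 * l1 + b2 * l2 + b3 * l3 = 0"
    and indep: "\<And>e1 e2. e1 * a1 + e2 * b1 = 0 \<Longrightarrow> e1 * a2 + e2 * b2 = 0 \<Longrightarrow> e1 * a3 + e2 * b3 = 0
       \<Longrightarrow> e1 = 0 \<and> e2 = 0"
    using orthogonal_pair_exists[of l1 l2 l3] by blast
  define u where "u s t = (s * t) * (W2 * W3) - (t * t) * (W2 * W1)" for s t
  define v where "v s t = (s * t) * (- (W2 * W2))" for s t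
  define w where "w s t = (s * t) * (W2 * W1) - (s * s) * (W2 * W3)" for s t
  have "binary_form 2 u" "binary_form 2 v" "binary_form 2 w"
    unfolding u_def v_def w_def by (intro binary_form_diff binary_form_scale binary_form_quadratic_monomials)+
  then obtain s t e1 e2 where st: "s \<noteq> 0 \<or> t \<noteq> 0" and e: "e1 \<noteq> 0 \<or> e2 \<noteq> 0"
    and grad: "grad_comb (e1 * a1 + e2 * b1) (e1 * a2 + e2 * b2) (e1 * a3 + e2 * b3)
       (\<lambda>k. u s t * A k + v s t * B k + w s t * C k) r1 = 0"
      "grad_comb (e1 * a1 + e2 * b1) (e1 * a2 + e2 * b2) (e1 * a3 + e2 * b3)
       (\<lambda>k. u s t * A k + v s t * B k + w s t * C k) r2 = 0"
    by (rule pencil_gradients_dependent_somewhere)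
  have "k1 \<in> {..<5}" "k2 \<in> {..<5}" "k3 \<in> {..<5}"
    unfolding cover(1) by simp_all
  moreover have "W1 * (u s t * v s t) + W2 * (u s t * w s t) + W3 * (v s t * w s t) = 0"
    unfolding u_def v_def w_def by (rule conic_parametrization(1))
  moreover have "u s t \<noteq> 0 \<or> v s t \<noteq> 0 \<or> w s t \<noteq> 0"
    unfolding u_def v_def w_def by (rule conic_parametrization(2)[OF assms(7-9) st])
  ultimately have on_X: "(\<lambda>k. u s t * A k + v s t * B k + w s t * C k) \<in> X"
    using plane_conic_point_in_X[OF conic _ _ _ minor] by simp
  have "(e1 * a1 + e2 * b1) * l1 + (e1 * a2 + e2 * b2) * l2 + (e1 * a3 + e2 * b3) * l3
      = e1 * (a1 * l1 + a2 * l2 + a3 * l3) + e2 * (b1 * l1 + b2 * l2 + b3 * l3)"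
    by (simp add: algebra_simps)
  then have "(e1 * a1 + e2 * b1) * l1 + (e1 * a2 + e2 * b2) * l2 + (e1 * a3 + e2 * b3) * l3 = 0"
    using a b by simp
  then show False
    using pencil_gradient_on_plane_trivial[OF conic cover minor on_X _ grad] indep e by blast
qed

lemma no_five_coplanar:
  assumes X: "A \<in> X" "B \<in> X" "C \<in> X" "D \<in> X" "P \<in> X"
    and distinct: "proj_distinct A B" "proj_distinct A C" "proj_distinct A D" "proj_distinct A P"
      "proj_distinct B C" "proj_distinct B D" "proj_distinct B P" "proj_distinct C D" "proj_distinct C P"
      "proj_distinct D P"
    and D: "\<forall>k<5. D k = d1 * A k + d2 * B k + d3 * C k"
    and P: "\<forall>k<5. P k = p1 * A k + p2 * B k + p3 * C k"
  shows False
proof -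
  note distinct' = distinct distinct[THEN proj_distinct_commute[THEN iffD1]]
  have d: "d1 \<noteq> 0" "d2 \<noteq> 0" "d3 \<noteq> 0" and p: "p1 \<noteq> 0" "p2 \<noteq> 0" "p3 \<noteq> 0"
    using coplanar_coeffs_nonzero[OF X(1-3) _ distinct(1,2,5)] X distinct D P by blast+
  have "d1 * p2 - d2 * p1 \<noteq> 0"
    using coplanar_cross_nonzero[of C D P d1 A d2 B d3 p1 p2 p3] X distinct' D P p by blast
  moreover have "d3 * p1 - d1 * p3 \<noteq> 0"
    using coplanar_cross_nonzero[of B D P d3 C d1 A d2 p3 p1 p2] X distinct' D P p by (simp add: ac_simps)
  moreover have "d2 * p3 - d3 * p2 \<noteq> 0"
    using coplanar_cross_nonzero[of A D P d2 B d3 C d1 p2 p3 p1] X distinct' D P p by (simp add: ac_simps)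
  moreover define W1 W2 W3 where "W1 = (d1 * d3) * (p2 * p3) - (d2 * d3) * (p1 * p3)"
    and "W2 = (d2 * d3) * (p1 * p2) - (d1 * d2) * (p2 * p3)"
    and "W3 = (d1 * d2) * (p1 * p3) - (d1 * d3) * (p1 * p2)"
  moreover have "W1 = (d3 * p3) * (d1 * p2 - d2 * p1)" "W2 = (d2 * p2) * (d3 * p1 - d1 * p3)"
    "W3 = (d1 * p1) * (d2 * p3 - d3 * p2)"
    unfolding W1_def W2_def W3_def by algebra+
  ultimately have W: "W1 \<noteq> 0" "W2 \<noteq> 0" "W3 \<noteq> 0" using d p by simp_all
  have "\<exists>l. quad_restricts_to_conic Q A B C W1 W2 W3 l"
    if "quad Q A = 0" "quad Q B = 0" "quad Q C = 0" "quad Q D = 0" "quad Q P = 0" for Q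
    using W(1) unfolding W1_def W2_def W3_def by (rule quad_restricts_to_conic_if_coplanar_five[OF that D P])
  then obtain l1 l2 l3 where conic: "quad_restricts_to_conic Q1 A B C W1 W2 W3 l1"
    "quad_restricts_to_conic Q2 A B C W1 W2 W3 l2" "quad_restricts_to_conic Q3 A B C W1 W2 W3 l3"
    using X unfolding mem_X_iff by metis
  have "nonzero5 A" using X(1) by (simp add: mem_X_iff)
  then obtain k1 k2 where k12: "k1 < 5" "k2 < 5" "A k1 * B k2 - A k2 * B k1 \<noteq> 0"
    using minor2_nonzero distinct(1) unfolding proj_distinct_def by blast
  moreover have "\<nexists>\<alpha> \<beta>. \<forall>k<5. C k = \<alpha> * A k + \<beta> * B k"
    using no_three_collinear[OF X(1-3) distinct(1,2,5)] by blast
  ultimately obtain k3 where k3: "k3 < 5" "distinct [k1, k2, k3]"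
    and minor: "det3 (A k1) (A k2) (A k3) (B k1) (B k2) (B k3) (C k1) (C k2) (C k3) \<noteq> 0"
    by (rule minor3_nonzero)
  obtain r1 r2 where "distinct [k1, k2, k3, r1, r2]" "{..<5} = {k1, k2, k3, r1, r2}"
    using lessThan5_split3[OF k12(1,2) k3(1,2)] by blast
  then show False using no_plane_conic_in_X[OF conic _ _ minor W] by blast
qed

section \<open>Separating quadrics\<close>

definition distinct_points :: "nat \<Rightarrow> (nat \<Rightarrow> nat \<Rightarrow> 'a) \<Rightarrow> bool" where
  "distinct_points n p \<longleftrightarrow> (\<forall>i<n. p i \<in> X) \<and> (\<forall>i<n. \<forall>i'<n. i \<noteq> i' \<longrightarrow> \<not> proj_eq (p i) (p i'))"

lemma distinct_points_proj_distinct: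
  "distinct_points n p \<Longrightarrow> i < n \<Longrightarrow> i' < n \<Longrightarrow> i \<noteq> i' \<Longrightarrow> proj_distinct (p i) (p i')"
  unfolding distinct_points_def proj_distinct_def by blast

lemma distinct_points_mem_X: "distinct_points n p \<Longrightarrow> i < n \<Longrightarrow> p i \<in> X"
  unfolding distinct_points_def by blast

lemma hyperplane_separates_two:
  assumes pts: "distinct_points n p" and "j < n" and S: "S \<subseteq> {..<n} - {j}" "card S \<le> 2"
  shows "hyperplane_separates p S (p j)"
proof -
  have "finite S" using S(1) finite_subset by blast
  have "\<not> in_span p S (p j)"
  proof
    assume "in_span p S (p j)"
    then obtain c where c: "\<forall>k<5. p j k = (\<Sum>i\<in>S. c i * p i k)" unfolding in_span_def by blast
    have "card S = 0 \<or> card S = 1 \<or> card S = 2" using S(2) by linarith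
    then consider "S = {}" | a where "S = {a}" | a b where "S = {a, b}" "a \<noteq> b"
      using \<open>finite S\<close> by (elim disjE) (auto simp: card_1_singleton_iff card_2_iff)
    then show False
    proof cases
      case 1
      have "nonzero5 (p j)" using distinct_points_mem_X[OF pts \<open>j < n\<close>] by (simp add: mem_X_iff)
      then show False using c 1 unfolding nonzero5_def by auto
    next
      case (2 a)
      then have "proj_eq (p j) (p a)" using c unfolding proj_eq_def by auto
      moreover have "proj_distinct (p j) (p a)"
        using S(1) 2 by (intro distinct_points_proj_distinct[OF pts \<open>j < n\<close>]) auto
      ultimately show False unfolding proj_distinct_def by blast
    next
      case (3 a b)
      then have "\<forall>k<5. p j k = c a * p a k + c b * p b k" using c by simp
      moreover have "a < n" "b < n" "a \<noteq> j" "b \<noteq> j" using S(1) 3 by auto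
      ultimately show False
        using no_three_collinear[of "p a" "p b" "p j" "c a" "c b"] \<open>j < n\<close> 3(2)
        by (simp add: distinct_points_mem_X[OF pts] distinct_points_proj_distinct[OF pts])
    qed
  qed
  then show ?thesis using hyperplane_separates_or_in_span[OF \<open>finite S\<close>] by blast
qed

text \<open>If neither {a, b, c} nor {a, b, d} can be separated from p j, then p d lies in the plane
  spanned by p a, p b, p c, which also contains p j.\<close>
lemma hyperplane_separates_one_of_two_triples:
  assumes pts: "distinct_points n p" and "j < n"
    and abcd: "distinct [a, b, c, d, j]" "a < n" "b < n" "c < n" "d < n"
  shows "hyperplane_separates p {a, b, c} (p j) \<or> hyperplane_separates p {a, b, d} (p j)"
proof (rule ccontr)
  assume "\<not> ?thesis"
  then have "in_span p {a, b, c} (p j)" "in_span p {a, b, d} (p j)"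
    using hyperplane_separates_or_in_span[of "{a, b, c}" p "p j"]
      hyperplane_separates_or_in_span[of "{a, b, d}" p "p j"] by auto
  then obtain e f where "\<forall>k<5. p j k = (\<Sum>i\<in>{a, b, c}. e i * p i k)" "\<forall>k<5. p j k = (\<Sum>i\<in>{a, b, d}. f i * p i k)"
    unfolding in_span_def by blast
  then have e: "\<forall>k<5. p j k = e a * p a k + e b * p b k + e c * p c k"
    and f: "\<forall>k<5. p j k = f a * p a k + f b * p b k + f d * p d k"
    using abcd(1) by (simp_all add: add.assoc)
  have X: "p a \<in> X" "p b \<in> X" "p c \<in> X" "p d \<in> X" "p j \<in> X"
    using abcd(2-5) \<open>j < n\<close> by (simp_all add: distinct_points_mem_X[OF pts])
  have dist: "proj_distinct (p i) (p i')" if "i \<in> {a, b, c, d, j}" "i' \<in> {a, b, c, d, j}" "i \<noteq> i'" for i i'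
    using that abcd(2-5) \<open>j < n\<close> by (intro distinct_points_proj_distinct[OF pts]) auto
  have "f d \<noteq> 0"
  proof
    assume "f d = 0"
    then have on_line: "\<forall>k<5. p j k = f a * p a k + f b * p b k" using f by simp
    show False using no_three_collinear[OF X(1,2,5) _ _ _ on_line] dist abcd(1) by simp
  qed
  have in_plane: "\<forall>k<5. p d k = ((e a - f a) / f d) * p a k + ((e b - f b) / f d) * p b k + (e c / f d) * p c k"
  proof (intro allI impI)
    fix k :: nat assume "k < 5"
    have "f d * p d k = (e a - f a) * p a k + (e b - f b) * p b k + e c * p c k"
      using e f \<open>k < 5\<close> by (simp add: algebra_simps)
    then have "p d k = ((e a - f a) * p a k + (e b - f b) * p b k + e c * p c k) / f d"
      using \<open>f d \<noteq> 0\<close> by (simp add: eq_divide_eq mult.commute)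
    then show "p d k = ((e a - f a) / f d) * p a k + ((e b - f b) / f d) * p b k + (e c / f d) * p c k"
      by (simp add: add_divide_distrib)
  qed
  show False using no_five_coplanar[OF X _ _ _ _ _ _ _ _ _ _ in_plane e] dist abcd(1) by simp
qed

lemma hyperplane_separates_one_of_two_truncated_triples:
  assumes pts: "distinct_points n p" and "j < n" and "distinct [x, y, z, w, j]"
  shows "hyperplane_separates p ({x, y, z} \<inter> {..<n}) (p j) \<or> hyperplane_separates p ({x, y, w} \<inter> {..<n}) (p j)"
proof (cases "x < n \<and> y < n \<and> z < n \<and> w < n")
  case True
  then have "{x, y, z} \<inter> {..<n} = {x, y, z}" "{x, y, w} \<inter> {..<n} = {x, y, w}" by auto
  then show ?thesis using hyperplane_separates_one_of_two_triples[OF pts \<open>j < n\<close> assms(3)] True by simp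
next
  case False
  have "card ({x, y, z} \<inter> {..<n}) \<le> 2 \<or> card ({x, y, w} \<inter> {..<n}) \<le> 2"
  proof -
    have "{x, y, z} \<inter> {..<n} \<subseteq> {y, z} \<or> {x, y, z} \<inter> {..<n} \<subseteq> {x, z} \<or> {x, y, z} \<inter> {..<n} \<subseteq> {x, y}
        \<or> {x, y, w} \<inter> {..<n} \<subseteq> {x, y}"
      using False by auto
    then show ?thesis by (elim disjE) (auto dest: card_le_2_if_subset_pair)
  qed
  moreover have "{x, y, z} \<inter> {..<n} \<subseteq> {..<n} - {j}" "{x, y, w} \<inter> {..<n} \<subseteq> {..<n} - {j}"
    using assms(3) by auto
  ultimately show ?thesis using hyperplane_separates_two[OF pts \<open>j < n\<close>] by blast
qed

lemma separating_quadric_exists: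
  assumes pts: "distinct_points n p" and "n \<le> 7" "j < n"
  shows "\<exists>M. quad M (p j) \<noteq> 0 \<and> (\<forall>i<n. i \<noteq> j \<longrightarrow> quad M (p i) = 0)"
proof -
  define good where "good T \<longleftrightarrow> hyperplane_separates p (T \<inter> {..<n}) (p j)" for T
  \<comment> \<open>the points other than p j, padded to exactly six indices; indices beyond n are ignored\<close>
  define others where "others = filter (\<lambda>i. i \<noteq> j) [0..<7]"
  have others: "distinct others" "set others = {..<7} - {j}"
    unfolding others_def by auto
  then have "length others = 6" using assms(2,3) distinct_card[of others] by simp
  then obtain a b c d e f where abcdef: "others = [a, b, c, d, e, f]"
    by (auto simp: numeral_eq_Suc length_Suc_conv)
  have j_notin: "j \<notin> {a, b, c, d, e, f}"
    using others(2) unfolding abcdef by auto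
  have H: "good {x, y, z} \<or> good {x, y, w}"
    if "{x, y, z, w} \<subseteq> {a, b, c, d, e, f}" "distinct [x, y, z, w]" for x y z w
  proof -
    have "distinct [x, y, z, w, j]" using that j_notin by auto
    then show ?thesis unfolding good_def
      by (rule hyperplane_separates_one_of_two_truncated_triples[OF pts \<open>j < n\<close>])
  qed
  obtain T where "T \<subseteq> {a, b, c, d, e, f}" "good T" "good ({a, b, c, d, e, f} - T)"
    by (rule split_six[of a b c d e f good, OF _ H]) (use others(1) abcdef in auto)
  then obtain l m where l: "\<forall>i\<in>T \<inter> {..<n}. dot l (p i) = 0" "dot l (p j) \<noteq> 0"
    and m: "\<forall>i\<in>({a, b, c, d, e, f} - T) \<inter> {..<n}. dot m (p i) = 0" "dot m (p j) \<noteq> 0"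
    unfolding good_def hyperplane_separates_def by blast
  have "quad (\<lambda>r s. l r * m s) (p i) = 0" if "i < n" "i \<noteq> j" for i
  proof -
    have "i \<in> {a, b, c, d, e, f}" using that assms(2) others(2) unfolding abcdef by auto
    then have "dot l (p i) = 0 \<or> dot m (p i) = 0" using l(1) m(1) that(1) by blast
    then show ?thesis by (auto simp: quad_product)
  qed
  moreover have "quad (\<lambda>r s. l r * m s) (p j) \<noteq> 0" using l(2) m(2) by (simp add: quad_product)
  ultimately show ?thesis by blast
qed

end

theorem corollary2p1:
  fixes Q1 Q2 Q3 :: "nat \<Rightarrow> nat \<Rightarrow> 'a::field"
    and p :: "nat \<Rightarrow> nat \<Rightarrow> 'a"
    and n :: nat
  assumes "alg_closed_field TYPE('a)"
    and "char_not_2_3_5 TYPE('a)"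
    and "smooth_ci_curve Q1 Q2 Q3"
    and "n \<le> 7"
    and "\<forall>i<n. p i \<in> cone3 Q1 Q2 Q3"
    and "\<forall>i<n. \<forall>j<n. i \<noteq> j \<longrightarrow> \<not> proj_eq (p i) (p j)"
  shows "indep_on_quadrics n p"
proof -
  interpret canonical_genus5_curve Q1 Q2 Q3
    using assms(1,3) by unfold_locales
  have "distinct_points n p"
    using assms(5,6) unfolding distinct_points_def by blast
  then show ?thesis
    by (intro indep_on_quadrics_if_separating_quadrics separating_quadric_exists assms(4))
qed

end
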